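(* For every $n\in[-2,\infty)$ and $s>s^*_n$, the universal profile $f_n(s)$ is strictly decreasing as a function of $s$ on $(s_n^*,\infty)$, and (for fixed $s$) strictly decreasing as a function of $n$ over those $n\ge-2$ with $s>s^*_n$.
   Context: For $k>-1$ and $s\in\mathbb R$ let $I_k(s)=\int_0^\infty x^ke^{-\frac14x^4-\frac12sx^2}dx$. For $n>-2$ define $f_n(s)=\frac{I_{n+1}(s)}{I_{n+3}(s)+sI_{n+1}(s)}$ (which equals $\frac{I_{n+1}(s)}{nI_{n-1}(s)}=\frac{\int_{\mathbb R^n}|x|^2e^{-\frac14|x|^4-\frac s2|x|^2}dx}{n\int_{\mathbb R^n}e^{-\frac14|x|^4-\frac s2|x|^2}dx}$ for $n>0$), and $f_{-2}(s)=s^{-1}$. These satisfy $f_n(s)=\frac{1}{(n+2)f_{n+2}(s)+s}$. Let $s_n^*=-\infty$ for $n\ge0$ and $s_n^*=\sup\{s:(n+2)f_{n+2}(s)+s=0\}$ for $n\in[-2,0)$. *)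

theory Defs
  imports "HOL-Analysis.Analysis"
begin

text \<open>I_k(s) = int_0^infty x^k exp(-x^4/4 - s x^2/2) dx  (meaningful for k > -1).\<close>
definition I :: "real \<Rightarrow> real \<Rightarrow> real" where
  "I k s = (LINT x:{0<..}|lborel. x powr k * exp (- (x ^ 4) / 4 - s * x\<^sup>2 / 2))"

text \<open>Universal profile f_n(s); for n > -2 via the integral formula, f_{-2}(s) = 1/s.
  Values for n < -2 are irrelevant.\<close>
definition f :: "real \<Rightarrow> real \<Rightarrow> real" where
  "f n s = (if n = -2 then 1 / s
            else I (n + 1) s / (I (n + 3) s + s * I (n + 1) s))"

definition sstar :: "real \<Rightarrow> ereal" where
  "sstar n = (if 0 \<le> n then -\<infinity>
              else Sup (ereal ` {s. (n + 2) * f (n + 2) s + s = 0}))"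

end

theory Submission
  imports Defs "HOL-Real_Asymp.Real_Asymp"
begin

text \<open>Differentiating under the integral sign and integrating by parts turn the moments
  \<open>I k s\<close> into a closed system: \<open>d/ds I k = - I (k+2) / 2\<close> and
  \<open>I (k+4) + s I (k+2) = (k+1) I k\<close>. Consequently every profile solves the Riccati equation
  \<open>f' = (n f\<^sup>2 + s f - 1) / 2\<close>, is positive and satisfies \<open>f \<le> 1/s\<close> for \<open>s > 0\<close>.
  If \<open>f' \<ge> 0\<close> at some point, then \<open>q = n f\<^sup>2 + s f - 1\<close> stays positive afterwards,
  because \<open>q' = f > 0\<close> wherever \<open>q = 0\<close>; so \<open>f\<close> would increase for ever, contradicting
  \<open>f \<le> 1/s\<close>. In the same way, if \<open>f\<^sub>n\<^sub>2 \<ge> f\<^sub>n\<^sub>1\<close> at some point with \<open>n\<^sub>1 < n\<^sub>2\<close>, the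
  difference has derivative \<open>(n\<^sub>2 - n\<^sub>1) f\<^sub>n\<^sub>2\<^sup>2 / 2 > 0\<close> at its zeros, stays positive, and
  eventually increases, which again contradicts \<open>f \<le> 1/s\<close>.\<close>

subsection \<open>The moments \<open>I k s\<close>\<close>

definition quartic_weight :: "real \<Rightarrow> real \<Rightarrow> real" where
  "quartic_weight s x = exp (- (x ^ 4) / 4 - s * x\<^sup>2 / 2)"

lemma I_eq_set_integral: "I k s = (LINT x:{0<..}|lborel. x powr k * quartic_weight s x)"
  unfolding I_def quartic_weight_def by simp

lemma quartic_weight_pos: "quartic_weight s x > 0"
  by (simp add: quartic_weight_def)

lemma quartic_weight_measurable [measurable]:
  "(\<lambda>x. x powr k * quartic_weight s x) \<in> borel_measurable borel"
  unfolding quartic_weight_def by measurable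

lemma set_integrable_Gamma_kernel:
  assumes "k > -1"
  shows "set_integrable lborel {0<..} (\<lambda>t::real. t powr k / exp t)"
proof -
  have "((\<lambda>t. t powr (k + 1 - 1) / exp t) has_integral Gamma (k + 1)) {0..}"
    by (rule Gamma_integral_real) (use assms in auto)
  hence "(\<lambda>t. t powr k / exp t) integrable_on {0..}"
    by (auto simp: integrable_on_def)
  hence "(\<lambda>t. t powr k / exp t) absolutely_integrable_on {0..}"
    by (subst absolutely_integrable_on_iff_nonneg) auto
  hence "set_integrable lborel {0..} (\<lambda>t::real. t powr k / exp t)"
    unfolding set_integrable_def by (subst (asm) integrable_completion) auto
  thus ?thesis by (rule set_integrable_subset) auto
qed

lemma quartic_exponent_le:
  fixes x s :: real
  assumes "x \<ge> 0"
  shows "- (x ^ 4) / 4 - s * x\<^sup>2 / 2 \<le> 2 + s\<^sup>2 / 2 - x"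
proof -
  have "0 \<le> (x\<^sup>2 + 2 * s)\<^sup>2" "0 \<le> (x\<^sup>2 - 2)\<^sup>2" "0 \<le> (x - 1)\<^sup>2" by simp_all
  thus ?thesis by (simp add: power2_eq_square algebra_simps power4_eq_xxxx)
qed

lemma set_integrable_moment:
  assumes "k > -1"
  shows "set_integrable lborel {0<..} (\<lambda>x. x powr k * quartic_weight s x)"
  unfolding set_integrable_def
proof (rule Bochner_Integration.integrable_bound[OF _ _ AE_I2])
  let ?c = "exp (2 + s\<^sup>2 / 2)"
  show "integrable lborel (\<lambda>x. indicat_real {0<..} x *\<^sub>R (?c * (x powr k / exp x)))"
    using integrable_mult_right[OF set_integrable_Gamma_kernel[OF assms, unfolded set_integrable_def], of ?c]
    by (simp add: mult_ac)
  fix x :: real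
  show "norm (indicat_real {0<..} x *\<^sub>R (x powr k * quartic_weight s x))
     \<le> norm (indicat_real {0<..} x *\<^sub>R (?c * (x powr k / exp x)))"
  proof (cases "x > 0")
    case True
    have "quartic_weight s x \<le> exp (2 + s\<^sup>2 / 2 - x)"
      unfolding quartic_weight_def using quartic_exponent_le[of x s] True by simp
    also have "\<dots> = ?c / exp x" by (simp add: exp_diff)
    finally have "x powr k * quartic_weight s x \<le> x powr k * (?c / exp x)"
      by (intro mult_left_mono) auto
    thus ?thesis using True quartic_weight_pos[of s x] by (simp add: abs_mult mult_ac)
  qed simp
qed simp

lemma I_pos:
  assumes "k > -1"
  shows "I k s > 0"
proof -
  let ?g = "\<lambda>x. indicat_real {0<..} x *\<^sub>R (x powr k * quartic_weight s x)"
  have int: "integrable lborel ?g"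
    using set_integrable_moment[OF assms] unfolding set_integrable_def .
  have nonneg: "AE x in lborel. 0 \<le> ?g x"
    by (auto simp: indicator_def intro!: AE_I2 mult_nonneg_nonneg less_imp_le[OF quartic_weight_pos])
  have I: "I k s = integral\<^sup>L lborel ?g"
    unfolding I_eq_set_integral set_lebesgue_integral_def ..
  have "integral\<^sup>L lborel ?g \<noteq> 0"
  proof
    assume "integral\<^sup>L lborel ?g = 0"
    hence "AE x in lborel. ?g x = 0"
      using integral_nonneg_eq_0_iff_AE[OF int nonneg] by simp
    hence "AE x in lborel. x \<notin> {0<..<1::real}"
      by eventually_elim (auto simp: indicator_def quartic_weight_def split: if_splits)
    hence "{0<..<1::real} \<in> null_sets lborel" by (subst AE_iff_null_sets) simp_all
    thus False by (simp add: null_sets_def)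
  qed
  with I integral_nonneg_AE[OF nonneg] show ?thesis by linarith
qed

lemma abs_exp_minus_one_minus_le: "\<bar>exp (y::real) - 1 - y\<bar> \<le> exp \<bar>y\<bar> * y\<^sup>2 / 2"
proof -
  obtain t where t: "\<bar>t\<bar> \<le> \<bar>y\<bar>" "exp y = (\<Sum>m<2. y ^ m / fact m) + exp t / fact 2 * y ^ 2"
    using Maclaurin_exp_le[of y 2] by blast
  have "exp y - 1 - y = exp t / 2 * y\<^sup>2" using t(2) by (simp add: eval_nat_numeral)
  moreover have "exp t / 2 * y\<^sup>2 \<le> exp \<bar>y\<bar> / 2 * y\<^sup>2"
    using t(1) by (intro mult_right_mono) auto
  moreover have "0 \<le> exp t / 2 * y\<^sup>2" by simp
  ultimately show ?thesis by (simp only: abs_of_nonneg)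
qed

lemma moment_integrand_taylor_bound:
  fixes x h s k :: real
  assumes x: "x > 0" and h: "\<bar>h\<bar> \<le> 1"
  shows "\<bar>x powr k * quartic_weight (s + h) x - x powr k * quartic_weight s x
            + h / 2 * (x powr (k + 2) * quartic_weight s x)\<bar>
         \<le> h\<^sup>2 / 8 * (x powr (k + 4) * quartic_weight (s - 1) x)"
proof -
  define y where "y = - h * x\<^sup>2 / 2"
  define m where "m = x powr k * quartic_weight s x"
  have m: "m > 0" using x quartic_weight_pos[of s x] by (simp add: m_def)
  have "x powr k * quartic_weight (s + h) x - m + h / 2 * (x powr (k + 2) * quartic_weight s x)
        = m * (exp y - 1 - y)"
    using x unfolding m_def y_def quartic_weight_def
    by (simp add: powr_add exp_add[symmetric] algebra_simps)
  also have "\<bar>\<dots>\<bar> = m * \<bar>exp y - 1 - y\<bar>"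
    using m by (simp add: abs_mult)
  also have "\<dots> \<le> m * (exp \<bar>y\<bar> * y\<^sup>2 / 2)"
    using m by (intro mult_left_mono abs_exp_minus_one_minus_le) simp
  also have "\<dots> \<le> m * (exp (x\<^sup>2 / 2) * (h\<^sup>2 * x ^ 4 / 8))"
  proof -
    have "\<bar>y\<bar> \<le> x\<^sup>2 / 2"
      unfolding y_def using h by (auto simp: abs_mult intro!: mult_left_le_one_le)
    moreover have "y\<^sup>2 / 2 = h\<^sup>2 * x ^ 4 / 8"
      unfolding y_def by (simp add: power2_eq_square power4_eq_xxxx)
    ultimately show ?thesis
      using m by (simp add: mult_left_mono mult_right_mono flip: times_divide_eq_right)
  qed
  also have "\<dots> = h\<^sup>2 / 8 * (x powr (k + 4) * quartic_weight (s - 1) x)"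
    using x unfolding m_def quartic_weight_def
    by (simp add: powr_add exp_add[symmetric] field_simps)
  finally show ?thesis unfolding m_def .
qed

lemma I_taylor_bound:
  assumes k: "k > -1" and h: "\<bar>h\<bar> \<le> 1"
  shows "\<bar>I k (s + h) - I k s + h / 2 * I (k + 2) s\<bar> \<le> h\<^sup>2 / 8 * I (k + 4) (s - 1)"
proof -
  let ?r = "\<lambda>x. x powr k * quartic_weight (s + h) x - x powr k * quartic_weight s x
               + h / 2 * (x powr (k + 2) * quartic_weight s x)"
  let ?b = "\<lambda>x. h\<^sup>2 / 8 * (x powr (k + 4) * quartic_weight (s - 1) x)"
  have int: "set_integrable lborel {0<..} (\<lambda>x. x powr j * quartic_weight t x)"
    if "j \<ge> k" for j t
    using k that by (intro set_integrable_moment) auto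
  have int_r: "set_integrable lborel {0<..} ?r"
    using int[of k] int[of "k + 2"] by (intro set_integral_add set_integral_diff set_integrable_mult_right) auto
  have int_b: "set_integrable lborel {0<..} ?b"
    using int[of "k + 4"] by (intro set_integrable_mult_right) auto
  have r: "(LINT x:{0<..}|lborel. ?r x) = I k (s + h) - I k s + h / 2 * I (k + 2) s"
    unfolding I_eq_set_integral using int[of k] int[of "k + 2"]
    by (simp add: set_integral_add set_integral_diff)
  have b: "(LINT x:{0<..}|lborel. ?b x) = h\<^sup>2 / 8 * I (k + 4) (s - 1)"
    unfolding I_eq_set_integral by (rule set_integral_mult_right)
  have pointwise: "\<bar>?r x\<bar> \<le> ?b x" if "x \<in> {0<..}" for x
    using moment_integrand_taylor_bound[OF _ h, of x k s] that by simp
  have "(LINT x:{0<..}|lborel. ?r x) \<le> (LINT x:{0<..}|lborel. ?b x)"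
    using pointwise by (intro set_integral_mono[OF int_r int_b]) (metis abs_le_D1)
  moreover have "(LINT x:{0<..}|lborel. - ?b x) \<le> (LINT x:{0<..}|lborel. ?r x)"
  proof (rule set_integral_mono[OF _ int_r])
    show "set_integrable lborel {0<..} (\<lambda>x. - ?b x)"
      using integrable_minus[OF int_b[unfolded set_integrable_def]]
      by (simp add: set_integrable_def)
  qed (use pointwise in \<open>metis abs_le_D2 minus_le_iff\<close>)
  ultimately show ?thesis
    unfolding set_integral_uminus[OF int_b] r b by (intro abs_leI) linarith+
qed

lemma I_has_real_derivative:
  assumes k: "k > -1"
  shows "((\<lambda>s. I k s) has_real_derivative - I (k + 2) s / 2) (at s)"
  unfolding DERIV_def
proof (rule LIM_zero_cancel, rule Lim_null_comparison)
  let ?C = "I (k + 4) (s - 1)"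
  have "norm ((I k (s + h) - I k s) / h - - I (k + 2) s / 2) \<le> \<bar>h\<bar> / 8 * ?C"
    if h: "h \<noteq> 0" "\<bar>h\<bar> < 1" for h
  proof -
    have "norm ((I k (s + h) - I k s) / h - - I (k + 2) s / 2)
          = \<bar>I k (s + h) - I k s + h / 2 * I (k + 2) s\<bar> / \<bar>h\<bar>"
      using h by (simp add: field_simps flip: abs_divide)
    also have "\<dots> \<le> h\<^sup>2 / 8 * ?C / \<bar>h\<bar>"
      using I_taylor_bound[OF k, of h s] h by (intro divide_right_mono) auto
    also have "\<dots> = \<bar>h\<bar> / 8 * ?C"
      using h by (simp add: power2_eq_square field_simps abs_mult_self_eq)
    finally show ?thesis .
  qed
  thus "\<forall>\<^sub>F h in at 0. norm ((I k (s + h) - I k s) / h - - I (k + 2) s / 2) \<le> \<bar>h\<bar> / 8 * ?C"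
    unfolding eventually_at by (intro exI[of _ 1]) auto
  show "((\<lambda>h::real. \<bar>h\<bar> / 8 * ?C) \<longlongrightarrow> 0) (at 0)"
    by (rule tendsto_eq_intros refl | simp)+
qed

lemma moment_primitive_has_real_derivative:
  assumes x: "x > 0"
  shows "((\<lambda>x. x powr (k + 1) * quartic_weight s x) has_real_derivative
           (k + 1) * (x powr k * quartic_weight s x) - x powr (k + 4) * quartic_weight s x
             - s * (x powr (k + 2) * quartic_weight s x)) (at x)"
proof -
  have "((\<lambda>x. x powr (k + 1) * quartic_weight s x) has_real_derivative
          (k + 1) * x powr k * quartic_weight s x
            + x powr (k + 1) * (quartic_weight s x * (- (x ^ 3) - s * x))) (at x)"
    unfolding quartic_weight_def
    by (rule derivative_eq_intros refl | simp add: x)+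
  moreover have "x powr (k + 4) = x powr (k + 1) * x powr 3" "x powr (k + 2) = x powr (k + 1) * x powr 1"
    unfolding powr_add[symmetric] by (simp_all add: add.commute)
  ultimately show ?thesis using x by (simp add: algebra_simps powr_realpow)
qed

text \<open>The boundary terms of the integration by parts vanish because \<open>k + 1 > 0\<close>.\<close>
lemma I_recurrence:
  assumes k: "k > -1"
  shows "I (k + 4) s + s * I (k + 2) s = (k + 1) * I k s"
proof -
  define F where "F x = x powr (k + 1) * quartic_weight s x" for x
  define g where "g x = (k + 1) * (x powr k * quartic_weight s x) - x powr (k + 4) * quartic_weight s x
                        - s * (x powr (k + 2) * quartic_weight s x)" for x
  have int: "set_integrable lborel {0<..} (\<lambda>x. x powr j * quartic_weight s x)" if "j \<ge> k" for j
    using k that by (intro set_integrable_moment) auto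
  have int_g: "set_integrable lborel {0<..} g"
    unfolding g_def using int[of k] int[of "k + 2"] int[of "k + 4"]
    by (intro set_integral_diff set_integrable_mult_right) auto
  have "(LBINT x=0..\<infinity>. g x) = 0 - 0"
  proof (rule interval_integral_FTC_integrable[where F = F])
    fix x :: real
    assume "0 < ereal x"
    hence x: "x > 0" by simp
    show "(F has_vector_derivative g x) (at x)"
      using moment_primitive_has_real_derivative[OF x, of k s]
      unfolding F_def g_def by (simp add: has_real_derivative_iff_has_vector_derivative)
    show "isCont g x"
      unfolding g_def quartic_weight_def using x by (intro continuous_intros) auto
  next
    show "set_integrable lborel (einterval 0 \<infinity>) g" using int_g by (simp add: zero_ereal_def)
    have "((\<lambda>x::real. x powr (k + 1) * exp (- (x ^ 4) / 4 - s * x\<^sup>2 / 2)) \<longlongrightarrow> 0) (at_right 0)"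
      using k by real_asymp
    thus "((F \<circ> real_of_ereal) \<longlongrightarrow> 0) (at_right 0)"
      unfolding zero_ereal_def ereal_tendsto_simps F_def quartic_weight_def .
    have "((\<lambda>x::real. x powr (k + 1) * exp (- (x ^ 4) / 4 - s * x\<^sup>2 / 2)) \<longlongrightarrow> 0) at_top"
      by real_asymp
    thus "((F \<circ> real_of_ereal) \<longlongrightarrow> 0) (at_left \<infinity>)"
      unfolding ereal_tendsto_simps F_def quartic_weight_def .
  qed simp
  hence "(LINT x:{0<..}|lborel. g x) = 0"
    by (simp add: interval_integral_Ioi zero_ereal_def)
  moreover have "(LINT x:{0<..}|lborel. g x) = (k + 1) * I k s - I (k + 4) s - s * I (k + 2) s"
    unfolding g_def I_eq_set_integral using int[of k] int[of "k + 2"] int[of "k + 4"]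
    by (simp add: set_integral_diff set_integrable_mult_right)
  ultimately show ?thesis by linarith
qed

subsection \<open>The profiles \<open>f n\<close>\<close>

definition profile_denom :: "real \<Rightarrow> real \<Rightarrow> real" where
  "profile_denom n s = I (n + 3) s + s * I (n + 1) s"

lemma f_eq_profile_denom: "n \<noteq> -2 \<Longrightarrow> f n s = I (n + 1) s / profile_denom n s"
  unfolding f_def profile_denom_def by simp

lemma profile_denom_has_real_derivative:
  assumes n: "n > -2"
  shows "(profile_denom n has_real_derivative - n * I (n + 1) s / 2) (at s)"
proof -
  have d3: "((\<lambda>t. I (n + 3) t) has_real_derivative - I (n + 3 + 2) s / 2) (at s)"
    using n by (intro I_has_real_derivative) auto
  have d1: "((\<lambda>t. I (n + 1) t) has_real_derivative - I (n + 1 + 2) s / 2) (at s)"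
    using n by (intro I_has_real_derivative) auto
  have rec: "I (n + 1 + 4) s + s * I (n + 1 + 2) s = (n + 1 + 1) * I (n + 1) s"
    using n by (intro I_recurrence) auto
  have "(profile_denom n has_real_derivative
          - I (n + 3 + 2) s / 2 + (1 * I (n + 1) s + (- I (n + 1 + 2) s / 2) * s)) (at s)"
    unfolding profile_denom_def[abs_def] by (intro DERIV_add d3 DERIV_mult DERIV_ident d1)
  moreover have "n + 3 + 2 = n + 1 + 4" "n + 1 + 2 = n + 3" by simp_all
  hence "- I (n + 3 + 2) s / 2 + (1 * I (n + 1) s + (- I (n + 1 + 2) s / 2) * s) = - n * I (n + 1) s / 2"
    using rec by (simp add: algebra_simps)
  ultimately show ?thesis by simp
qed

lemma profile_denom_pos_of_nonneg: "n > -2 \<Longrightarrow> s \<ge> 0 \<Longrightarrow> profile_denom n s > 0"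
  unfolding profile_denom_def using I_pos[of "n + 3" s] I_pos[of "n + 1" s]
  by (intro add_pos_nonneg) auto

text \<open>This is the recursion \<open>f\<^sub>n = 1 / ((n + 2) f\<^sub>n\<^sub>+\<^sub>2 + s)\<close>; it shows that \<open>s\<^sup>*\<^sub>n\<close> bounds the
  zeros of the denominator.\<close>
lemma shifted_profile_eq:
  assumes n: "n > -2"
  shows "(n + 2) * f (n + 2) s + s = profile_denom n s / I (n + 1) s"
proof -
  have rec: "I (n + 1 + 4) s + s * I (n + 1 + 2) s = (n + 1 + 1) * I (n + 1) s"
    using n by (intro I_recurrence) auto
  have "n + 1 + 4 = n + 2 + 3" "n + 1 + 2 = n + 2 + 1" "n + 1 + 1 = n + 2" "n + 2 + 1 = n + 3"
    by simp_all
  hence "f (n + 2) s = I (n + 3) s / ((n + 2) * I (n + 1) s)"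
    using n rec by (simp only: f_eq_profile_denom profile_denom_def)
  moreover have pos: "I (n + 1) s > 0" using n by (intro I_pos) auto
  ultimately have "(n + 2) * f (n + 2) s = I (n + 3) s / I (n + 1) s"
    using n by simp
  thus ?thesis using pos unfolding profile_denom_def by (simp add: add_divide_distrib)
qed

lemma sstar_minus_two: "sstar (-2) = 0"
proof -
  have "{s. (-2 + 2) * f (-2 + 2) s + s = 0} = {0::real}" by auto
  thus ?thesis unfolding sstar_def by (simp add: zero_ereal_def)
qed

lemma profile_denom_pos:
  assumes n: "n > -2" and s: "sstar n < ereal s"
  shows "profile_denom n s > 0"
proof (cases "s \<ge> 0")
  case True
  thus ?thesis using profile_denom_pos_of_nonneg[OF n] by auto
next
  case False
  show ?thesis
  proof (cases "n \<ge> 0")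
    case True
    have "profile_denom n 0 \<le> profile_denom n s"
    proof (rule DERIV_nonpos_imp_nonincreasing[where f = "profile_denom n"])
      fix x
      show "\<exists>y. DERIV (profile_denom n) x :> y \<and> y \<le> 0"
        using profile_denom_has_real_derivative[OF n, of x] I_pos[of "n + 1" x] n True
        by (intro exI[of _ "- n * I (n + 1) x / 2"]) auto
    qed (use False in simp)
    thus ?thesis using profile_denom_pos_of_nonneg[OF n, of 0] by simp
  next
    case False
    show ?thesis
    proof (rule ccontr)
      assume "\<not> profile_denom n s > 0"
      moreover have "isCont (profile_denom n) x" for x
        using DERIV_isCont[OF profile_denom_has_real_derivative[OF n]] .
      ultimately obtain t where t: "s \<le> t" "t \<le> 0" "profile_denom n t = 0"
        using IVT[of "profile_denom n" s 0 0] \<open>\<not> s \<ge> 0\<close> profile_denom_pos_of_nonneg[OF n, of 0]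
        by auto
      hence "(n + 2) * f (n + 2) t + t = 0" by (simp add: shifted_profile_eq[OF n])
      hence "ereal t \<le> sstar n"
        unfolding sstar_def using False by (auto intro: Sup_upper)
      with s t(1) show False by (meson ereal_less_eq(3) leD order.strict_trans2)
    qed
  qed
qed

definition riccati :: "real \<Rightarrow> real \<Rightarrow> real \<Rightarrow> real" where
  "riccati n s y = (n * y\<^sup>2 + s * y - 1) / 2"

lemma f_le_inverse:
  assumes "-2 \<le> n" "s > 0"
  shows "f n s \<le> 1 / s"
proof (cases "n = -2")
  case False
  hence n: "n > -2" using assms(1) by simp
  have "s * I (n + 1) s \<le> profile_denom n s"
    unfolding profile_denom_def using I_pos[of "n + 3" s] n by simp
  thus ?thesis
    using False assms(2) profile_denom_pos_of_nonneg[OF n, of s]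
    by (simp add: f_eq_profile_denom field_simps)
qed (simp add: f_def)

lemma f_pos:
  assumes "-2 \<le> n" "sstar n < ereal s"
  shows "f n s > 0"
proof (cases "n = -2")
  case True
  thus ?thesis using assms(2) by (simp add: f_def sstar_minus_two zero_ereal_def)
next
  case False
  hence "n > -2" using assms(1) by simp
  thus ?thesis
    using False assms(2) I_pos[of "n + 1" s] profile_denom_pos
    by (simp add: f_eq_profile_denom)
qed

lemma f_has_real_derivative:
  assumes "-2 \<le> n" "sstar n < ereal s"
  shows "(f n has_real_derivative riccati n s (f n s)) (at s)"
proof (cases "n = -2")
  case True
  hence s: "s > 0" using assms(2) by (simp add: sstar_minus_two zero_ereal_def)
  have "f n = (\<lambda>t. 1 / t)" using True by (auto simp: f_def fun_eq_iff)
  moreover have "((\<lambda>t. 1 / t) has_real_derivative - 1 / s\<^sup>2) (at s)"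
    using s by (auto intro!: derivative_eq_intros simp: power2_eq_square)
  ultimately show ?thesis
    using True s by (simp add: riccati_def field_simps power2_eq_square)
next
  case False
  hence n: "n > -2" using assms(1) by simp
  have D: "profile_denom n s > 0" by (rule profile_denom_pos[OF n assms(2)])
  have "f n = (\<lambda>t. I (n + 1) t / profile_denom n t)"
    using False by (auto simp: f_eq_profile_denom fun_eq_iff)
  moreover have "((\<lambda>t. I (n + 1) t / profile_denom n t) has_real_derivative
      ((- I (n + 1 + 2) s / 2) * profile_denom n s - I (n + 1) s * (- n * I (n + 1) s / 2))
        / (profile_denom n s * profile_denom n s)) (at s)"
    using n D by (intro DERIV_divide I_has_real_derivative profile_denom_has_real_derivative) auto
  moreover have "n + 1 + 2 = n + 3" by simp
  moreover have "I (n + 3) s = profile_denom n s - s * I (n + 1) s"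
    by (simp add: profile_denom_def)
  ultimately show ?thesis
    using D False by (simp add: riccati_def f_eq_profile_denom field_simps power2_eq_square)
qed

subsection \<open>Comparison arguments\<close>

lemma continuous_on_first_zero:
  fixes g :: "real \<Rightarrow> real"
  assumes cont: "continuous_on {a..b} g" and "g a > 0" "g b \<le> 0" "a \<le> b"
  shows "\<exists>m\<in>{a<..b}. g m = 0 \<and> (\<forall>x\<in>{a..<m}. g x > 0)"
proof -
  define S where "S = {x \<in> {a..b}. g x \<le> 0}"
  have "closed S"
    unfolding S_def using cont by (intro continuous_on_closed_Collect_le continuous_on_const) auto
  hence "compact ({a..b} \<inter> S)" by (intro compact_Int_closed compact_Icc)
  moreover have "{a..b} \<inter> S = S" by (auto simp: S_def)
  ultimately have "compact S" by simp
  have "b \<in> S" using assms by (simp add: S_def)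
  then obtain m where m: "m \<in> S" "\<And>y. y \<in> S \<Longrightarrow> m \<le> y"
    using compact_attains_inf[of S] \<open>compact S\<close> by auto
  have am: "a < m" using m(1) assms(2) by (cases "a = m") (auto simp: S_def)
  have "continuous_on {a..m} g"
    by (rule continuous_on_subset[OF cont]) (use m(1) in \<open>auto simp: S_def\<close>)
  then obtain z where z: "a \<le> z" "z \<le> m" "g z = 0"
    using IVT2'[of g m 0 a] m(1) assms(2) am by (auto simp: S_def)
  hence "z \<in> S" using m(1) by (auto simp: S_def)
  hence "z = m" using m(2) z(2) by fastforce
  moreover have "g x > 0" if "x \<in> {a..<m}" for x
    using m that by (fastforce simp: S_def)
  ultimately show ?thesis using am m(1) z(3) by (auto simp: S_def)
qed

lemma DERIV_pos_at_zeros_imp_pos: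
  fixes g g' :: "real \<Rightarrow> real"
  assumes deriv: "\<And>x. x \<ge> a \<Longrightarrow> (g has_real_derivative g' x) (at x)"
    and zeros: "\<And>x. x \<ge> a \<Longrightarrow> g x = 0 \<Longrightarrow> g' x > 0"
    and "g a \<ge> 0" "t > a"
  shows "g t > 0"
proof (rule ccontr)
  assume "\<not> g t > 0"
  obtain a' where a': "a \<le> a'" "a' < t" "g a' > 0"
  proof (cases "g a > 0")
    case True
    thus ?thesis using that \<open>t > a\<close> by auto
  next
    case False
    hence "g a = 0" using \<open>g a \<ge> 0\<close> by simp
    then obtain d where d: "d > 0" "\<And>h. h > 0 \<Longrightarrow> h < d \<Longrightarrow> g a < g (a + h)"
      using DERIV_pos_inc_right[OF deriv zeros] by auto
    define h where "h = min (d / 2) ((t - a) / 2)"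
    have "h > 0" "h < d" "a + h < t" using d(1) \<open>t > a\<close> by (auto simp: h_def min_def field_simps)
    thus ?thesis using that[of "a + h"] d(2) \<open>g a = 0\<close> by auto
  qed
  have "isCont g x" if "x \<ge> a" for x using deriv[OF that] by (rule DERIV_isCont)
  hence "continuous_on {a'..t} g" using a' by (intro continuous_at_imp_continuous_on) auto
  then obtain m where m: "a' < m" "m \<le> t" "g m = 0" and pos: "\<And>x. a' \<le> x \<Longrightarrow> x < m \<Longrightarrow> g x > 0"
    using continuous_on_first_zero[of a' t g] a' \<open>\<not> g t > 0\<close> by auto
  obtain d where d: "d > 0" "\<And>h. h > 0 \<Longrightarrow> h < d \<Longrightarrow> g (m - h) < g m"
    using DERIV_pos_inc_left[OF deriv[of m] zeros[of m]] a' m by auto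
  define h where "h = min (d / 2) ((m - a') / 2)"
  have "h > 0" "h < d" "a' \<le> m - h" using d(1) m(1) by (auto simp: h_def min_def field_simps)
  thus False using d(2) pos[of "m - h"] m(3) by force
qed

lemma nondecreasing_exceeds_inverse:
  fixes w :: "real \<Rightarrow> real"
  assumes "w a > 0" and mono: "\<And>x. a \<le> x \<Longrightarrow> w a \<le> w x"
  shows "\<exists>x\<ge>a. x > 0 \<and> 1 / x < w x"
proof -
  define x where "x = max a (2 / w a)"
  have "2 / w a \<le> x" "2 / w a > 0" using assms(1) by (simp_all add: x_def)
  hence x: "x > 0" "2 \<le> x * w a" using assms(1) by (linarith, simp add: field_simps)
  hence "1 / x \<le> w a / 2" by (simp add: field_simps)
  moreover have "w a \<le> w x" by (rule mono) (simp add: x_def)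
  ultimately show ?thesis using assms(1) x(1) by (intro exI[of _ x]) (auto simp: x_def)
qed

lemma sstar_less_mono: "sstar n < ereal s \<Longrightarrow> s \<le> t \<Longrightarrow> sstar n < ereal t"
  by (erule order.strict_trans2) simp

subsection \<open>Monotonicity of the profiles\<close>

lemma f_strictly_decreasing_in_s:
  assumes n: "-2 \<le> n" and s1: "sstar n < ereal s1" and "s1 < s2"
  shows "f n s2 < f n s1"
proof -
  have dom: "sstar n < ereal t" if "s1 \<le> t" for t using sstar_less_mono[OF s1 that] .
  have riccati_neg: "riccati n t (f n t) < 0" if t: "s1 \<le> t" for t
  proof (rule ccontr)
    assume "\<not> riccati n t (f n t) < 0"
    define q where "q x = n * (f n x)\<^sup>2 + x * f n x - 1" for x
    have q: "riccati n x (f n x) = q x / 2" for x by (simp add: riccati_def q_def)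
    have deriv_q: "(q has_real_derivative (2 * n * f n x + x) * (q x / 2) + f n x) (at x)"
      if "t \<le> x" for x
    proof -
      have "(f n has_real_derivative q x / 2) (at x)"
        using f_has_real_derivative[OF n dom] that t q by simp
      hence "(q has_real_derivative n * (2 * f n x * (q x / 2)) + (f n x + x * (q x / 2))) (at x)"
        unfolding q_def[abs_def] by (auto intro!: derivative_eq_intros)
      thus ?thesis by (simp add: algebra_simps)
    qed
    have q_nonneg: "q t \<ge> 0" using \<open>\<not> riccati n t (f n t) < 0\<close> q[of t] by linarith
    have zeros: "0 < (2 * n * f n x + x) * (q x / 2) + f n x" if "t \<le> x" "q x = 0" for x
      using f_pos[OF n dom] t that by simp
    have q_pos: "q x > 0" if "t < x" for x
      using DERIV_pos_at_zeros_imp_pos[OF deriv_q zeros q_nonneg that] .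
    have "f n (t + 1) \<le> f n x" if "t + 1 \<le> x" for x
    proof (rule DERIV_nonneg_imp_nondecreasing[OF that])
      fix y assume "t + 1 \<le> y"
      hence "s1 \<le> y" "t < y" using t by auto
      thus "\<exists>d. DERIV (f n) y :> d \<and> d \<ge> 0"
        using f_has_real_derivative[OF n dom] q_pos q by (metis less_imp_le half_gt_zero)
    qed
    hence "\<exists>x\<ge>t + 1. x > 0 \<and> 1 / x < f n x"
      using t by (intro nondecreasing_exceeds_inverse f_pos[OF n dom]) auto
    thus False using f_le_inverse[OF n] by (meson not_less)
  qed
  show ?thesis
  proof (rule DERIV_neg_imp_decreasing[OF \<open>s1 < s2\<close>])
    fix x assume "s1 \<le> x"
    thus "\<exists>y. DERIV (f n) x :> y \<and> y < 0"
      using f_has_real_derivative[OF n dom] riccati_neg by blast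
  qed
qed

lemma f_strictly_decreasing_in_n:
  assumes n1: "-2 \<le> n1" and "n1 < n2"
    and s1: "sstar n1 < ereal s" and s2: "sstar n2 < ereal s"
  shows "f n2 s < f n1 s"
proof (rule ccontr)
  assume "\<not> f n2 s < f n1 s"
  have n2: "-2 \<le> n2" using n1 \<open>n1 < n2\<close> by simp
  have dom1: "sstar n1 < ereal t" and dom2: "sstar n2 < ereal t" if "s \<le> t" for t
    using sstar_less_mono[OF s1 that] sstar_less_mono[OF s2 that] by auto
  define w where "w t = f n2 t - f n1 t" for t
  define w' where "w' t = riccati n2 t (f n2 t) - riccati n1 t (f n1 t)" for t
  have deriv_w: "(w has_real_derivative w' t) (at t)" if "s \<le> t" for t
    unfolding w_def[abs_def] w'_def
    by (intro DERIV_diff f_has_real_derivative n1 n2 dom1 dom2 that)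
  have w'_eq: "w' t = ((n2 - n1) * (f n2 t)\<^sup>2 + w t * (n1 * (f n1 t + f n2 t) + t)) / 2" for t
    by (simp add: w'_def w_def riccati_def field_simps power2_eq_square)
  have zeros: "w' t > 0" if "s \<le> t" "w t = 0" for t
    using \<open>n1 < n2\<close> f_pos[OF n2 dom2[OF that(1)]] that(2) by (simp add: w'_eq)
  have w_pos: "w t > 0" if "s < t" for t
    using DERIV_pos_at_zeros_imp_pos[OF deriv_w zeros _ that] \<open>\<not> f n2 s < f n1 s\<close>
    by (simp add: w_def)
  define a where "a = max (s + 1) 3"
  have w'_pos: "w' t > 0" if "a \<le> t" for t
  proof -
    have t: "s < t" "3 \<le> t" using that by (auto simp: a_def)
    have f: "0 < f n1 t" "f n1 t \<le> 1 / t" "0 < f n2 t" "f n2 t \<le> 1 / t"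
      using t f_pos[OF n1 dom1] f_pos[OF n2 dom2] f_le_inverse[OF n1] f_le_inverse[OF n2] by auto
    moreover have "1 / t \<le> 1 / 3" using t by (simp add: field_simps)
    ultimately have "f n1 t \<le> 1 / 3" "f n2 t \<le> 1 / 3" by simp_all
    define \<sigma> where "\<sigma> = f n1 t + f n2 t"
    have "\<sigma> \<le> 2 / 3" using \<open>f n1 t \<le> 1 / 3\<close> \<open>f n2 t \<le> 1 / 3\<close> unfolding \<sigma>_def by linarith
    moreover have "- 2 * \<sigma> \<le> n1 * \<sigma>"
      using n1 f by (intro mult_right_mono) (auto simp: \<sigma>_def)
    ultimately have "n1 * (f n1 t + f n2 t) + t > 0" using t unfolding \<sigma>_def[symmetric] by linarith
    thus ?thesis
      using w_pos[OF t(1)] \<open>n1 < n2\<close> f_pos[OF n2 dom2, of t] t by (simp add: w'_eq add_pos_pos)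
  qed
  have "w a \<le> w x" if "a \<le> x" for x
  proof (rule DERIV_nonneg_imp_nondecreasing[OF that])
    fix y assume "a \<le> y"
    moreover have "s \<le> y" using \<open>a \<le> y\<close> by (simp add: a_def)
    ultimately show "\<exists>d. DERIV w y :> d \<and> d \<ge> 0"
      using deriv_w w'_pos less_imp_le by blast
  qed
  then obtain x where "a \<le> x" "x > 0" "1 / x < w x"
    using nondecreasing_exceeds_inverse[of w a] w_pos[of a] by (auto simp: a_def)
  moreover have "s \<le> x" using \<open>a \<le> x\<close> by (simp add: a_def)
  ultimately show False
    using f_pos[OF n1 dom1] f_le_inverse[OF n2] by (force simp: w_def)
qed

theorem lemmaA1:
  shows "(\<forall>n s1 s2. -2 \<le> n \<and> sstar n < ereal s1 \<and> s1 < s2 \<longrightarrow> f n s2 < f n s1)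
       \<and> (\<forall>s n1 n2. -2 \<le> n1 \<and> n1 < n2 \<and> sstar n1 < ereal s \<and> sstar n2 < ereal s
             \<longrightarrow> f n2 s < f n1 s)"
  using f_strictly_decreasing_in_s f_strictly_decreasing_in_n by blast

end
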